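(* Let $\mathcal{M}=\mathbb{C}^{3\times 3}$. The coordinate functions of the polynomial maps $c_3$ and $c_4$ are contained in the $\mathbb{C}$-linear span (inside $\mathbb{C}[\mathcal{M}]$) of the coordinate functions of $\mathcal{P}_1:\mathcal{M}\to\bigwedge^3\mathcal{M}$, $A\mapsto I_3\wedge A\wedge A^2$.
   Context: $c_3:\mathbb{C}^{3\times 3}\to\mathrm{S}^3(\mathbb{C}^3)^\star$ (homogeneous cubic forms on $\mathbb{C}^3$) sends $A$ to the cubic form $\underline{x}\mapsto\det(\underline{x}\,|\,A\underline{x}\,|\,A^2\underline{x})$ (the $3\times 3$ matrix with columns $\underline{x},A\underline{x},A^2\underline{x}$). $c_4:\mathbb{C}^{3\times 3}\to\mathrm{S}^3(\mathbb{C}^3)$ (homogeneous cubic forms on row vectors) sends $A$ to the cubic form $\underline{x}^T\mapsto\det$ of the $3\times 3$ matrix with rows $\underline{x}^T,\underline{x}^TA,\underline{x}^TA^2$. Coordinate functions of $c_3,c_4$ are the coefficients of the monomials of these cubic forms, viewed as polynomial functions of $A$; coordinate functions of $\mathcal{P}_1$ are taken with respect to a basis of $\bigwedge^3\mathbb{C}^{3\times3}$ (e.g. the $3\times 3$ minors of the $9\times 3$ matrix whose columns are the entries of $I_3$, $A$, $A^2$). *)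

theory Defs
  imports "HOL-Analysis.Analysis" "HOL-Library.Numeral_Type"
begin

type_synonym mat3 = "complex ^ 3 ^ 3"
type_synonym vec3 = "complex ^ 3"

text \<open>c_3(A): the cubic form x |-> det(x | Ax | A^2 x) (columns x, Ax, A^2 x).
  In HOL-Analysis, M $ i $ j is row i, column j.\<close>
definition c3 :: "mat3 \<Rightarrow> vec3 \<Rightarrow> complex" where
  "c3 A x = det (\<chi> i j. (if j = 0 then x $ i
                          else if j = 1 then (A *v x) $ i
                          else ((A ** A) *v x) $ i))"

definition c4 :: "mat3 \<Rightarrow> vec3 \<Rightarrow> complex" where
  "c4 A x = det (\<chi> i j. (if i = 0 then x $ j
                          else if i = 1 then (x v* A) $ j
                          else (x v* (A ** A)) $ j))"

definition cubic_exps :: "(3 \<Rightarrow> nat) set" where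
  "cubic_exps = {e. (\<Sum>i\<in>UNIV. e i) = 3}"

definition monomial3 :: "(3 \<Rightarrow> nat) \<Rightarrow> vec3 \<Rightarrow> complex" where
  "monomial3 e x = (\<Prod>i\<in>UNIV. (x $ i) ^ e i)"

text \<open>c is the family of coordinate functions (monomial coefficients, as functions of A)
  of a polynomial map F from matrices to cubic forms.\<close>
definition is_coord_family ::
  "((3 \<Rightarrow> nat) \<Rightarrow> mat3 \<Rightarrow> complex) \<Rightarrow> (mat3 \<Rightarrow> vec3 \<Rightarrow> complex) \<Rightarrow> bool" where
  "is_coord_family c F \<longleftrightarrow>
     (\<forall>A x. F A x = (\<Sum>e\<in>cubic_exps. c e A * monomial3 e x))"

text \<open>The 9x3 matrix whose columns are the entries of I_3, A, A^2 (rows indexed by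
  matrix positions (i,j)); column k = 0,1,2.\<close>
definition P1_matrix_entry :: "mat3 \<Rightarrow> 3 \<times> 3 \<Rightarrow> 3 \<Rightarrow> complex" where
  "P1_matrix_entry A p k =
     (if k = 0 then (mat 1 :: mat3) $ fst p $ snd p
      else if k = 1 then A $ fst p $ snd p
      else (A ** A) $ fst p $ snd p)"

text \<open>Coordinate functions of P_1(A) = I_3 \<and> A \<and> A^2: the 3x3 minors of that 9x3 matrix,
  with rows selected by an injective map t (distinct positions t 0, t 1, t 2).\<close>
definition P1_coord :: "(3 \<Rightarrow> 3 \<times> 3) \<Rightarrow> mat3 \<Rightarrow> complex" where
  "P1_coord t A = det (\<chi> r k. P1_matrix_entry A (t r) k)"

definition in_P1_span :: "(mat3 \<Rightarrow> complex) \<Rightarrow> bool" where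
  "in_P1_span f \<longleftrightarrow>
     (\<exists>w :: (3 \<Rightarrow> 3 \<times> 3) \<Rightarrow> complex.
        \<forall>A. f A = (\<Sum>t\<in>{t. inj t}. w t * P1_coord t A))"

end

theory Submission imports Defs begin

text \<open>Let R(i,j) = (\<delta> i j, A i j, A^2 i j) be the rows of the 9x3 matrix of I, A, A^2.
  Row i of (x | Ax | A^2 x) is \<Sum>j. x j R(i,j), so by multilinearity of the determinant
  c3(A)(x) is the sum over all words f : 3 \<rightarrow> 3 of x(f 0) x(f 1) x(f 2) times
  det(R(0,f 0), R(1,f 1), R(2,f 2)), a 3x3 minor of that matrix, i.e. a coordinate of
  I \<and> A \<and> A^2. Grouping the words by their monomial gives a family of coefficients in the span
  of these minors, and since the cubic monomials are linearly independent every coordinate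
  family of c3 is this one. For c4 the same argument applies to the transposed matrix,
  with the minors det(R(f 0,0), R(f 1,1), R(f 2,2)).\<close>

lemma det_sum_rows_expand:
  fixes x :: "'a::comm_ring_1 ^ 'n::finite" and a :: "'n \<Rightarrow> 'n \<Rightarrow> 'a ^ 'n"
  shows "det (\<chi> i. \<Sum>j\<in>UNIV. x $ j *s a i j) =
         (\<Sum>f\<in>UNIV. (\<Prod>r\<in>UNIV. x $ f r) * det (\<chi> i. a i (f i)))"
proof -
  have "det (\<chi> i. \<Sum>j\<in>UNIV. x $ j *s a i j) =
        (\<Sum>f\<in>{f. \<forall>i. f i \<in> UNIV}. det (\<chi> i. x $ f i *s a i (f i)))"
    using det_linear_rows_sum[of UNIV "\<lambda>i j. x $ j *s a i j"] by simp
  then show ?thesis by (simp add: det_rows_mul)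
qed

definition P1_row :: "mat3 \<Rightarrow> 3 \<times> 3 \<Rightarrow> vec3" where
  "P1_row A p = (\<chi> k. P1_matrix_entry A p k)"

lemma P1_matrix_entry_eq:
  "P1_matrix_entry A (i, j) k = (if k = 0 then mat 1 else if k = 1 then A else A ** A) $ i $ j"
  by (simp add: P1_matrix_entry_def)

lemma sum_scale_P1_row_left:
  "(\<Sum>j\<in>UNIV. x $ j *s P1_row A (i, j)) =
   (\<chi> k. if k = 0 then x $ i else if k = 1 then (A *v x) $ i else ((A ** A) *v x) $ i)"
proof -
  have "(\<Sum>j\<in>UNIV. x $ j * M $ i $ j) = (M *v x) $ i" for M :: mat3
    by (simp add: matrix_vector_mult_def mult.commute)
  then show ?thesis
    by (simp add: vec_eq_iff sum_component P1_row_def P1_matrix_entry_eq)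
qed

lemma sum_scale_P1_row_right:
  "(\<Sum>j\<in>UNIV. x $ j *s P1_row A (j, i)) =
   (\<chi> k. if k = 0 then x $ i else if k = 1 then (x v* A) $ i else (x v* (A ** A)) $ i)"
proof -
  have "(\<Sum>j\<in>UNIV. x $ j * M $ j $ i) = (x v* M) $ i" for M :: mat3
    by (simp add: vector_matrix_mult_def)
  then show ?thesis
    by (simp add: vec_eq_iff sum_component P1_row_def P1_matrix_entry_eq)
qed

lemma c3_eq_sum_P1_coord:
  "c3 A x = (\<Sum>f\<in>UNIV. (\<Prod>r\<in>UNIV. x $ f r) * P1_coord (\<lambda>r. (r, f r)) A)"
proof -
  have "c3 A x = det (\<chi> i. \<Sum>j\<in>UNIV. x $ j *s P1_row A (i, j))"
    by (simp add: c3_def sum_scale_P1_row_left)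
  then show ?thesis
    by (simp add: det_sum_rows_expand P1_coord_def P1_row_def)
qed

lemma c4_eq_sum_P1_coord:
  "c4 A x = (\<Sum>f\<in>UNIV. (\<Prod>r\<in>UNIV. x $ f r) * P1_coord (\<lambda>r. (f r, r)) A)"
proof -
  have "c4 A x = det (transpose (\<chi> i. \<Sum>j\<in>UNIV. x $ j *s P1_row A (j, i)))"
    by (simp add: c4_def sum_scale_P1_row_right transpose_def)
  then show ?thesis
    by (simp add: det_transpose det_sum_rows_expand P1_coord_def P1_row_def)
qed

lemma cubic_exps_iff: "e \<in> cubic_exps \<longleftrightarrow> e 1 + e 2 + e 3 = 3"
  by (simp add: cubic_exps_def sum_3)

lemma cubic_exps_le: "e \<in> cubic_exps \<Longrightarrow> e i \<le> 3"
  using exhaust_3[of i] by (auto simp: cubic_exps_iff)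

lemma cubic_exps_eqI:
  assumes "e \<in> cubic_exps" "e' \<in> cubic_exps" "e 1 = e' 1" "e 2 = e' 2"
  shows "e = e'"
proof
  fix i :: 3
  have "e 3 = e' 3" using assms by (simp add: cubic_exps_iff)
  then show "e i = e' i" using assms exhaust_3[of i] by auto
qed

text \<open>Kronecker substitution: a cubic exponent vector is determined by the base-4 number
  with digits e 1, e 2, so x = (t, t^4, 1) sends distinct cubic monomials to distinct
  powers of t.\<close>
definition kronecker_index :: "(3 \<Rightarrow> nat) \<Rightarrow> nat" where
  "kronecker_index e = e 1 + 4 * e 2"

lemma monomial3_kronecker:
  "monomial3 e (vector [t, t ^ 4, 1]) = t ^ kronecker_index e"
proof -
  have "monomial3 e (vector [t, t ^ 4, 1]) = t ^ e 1 * (t ^ 4) ^ e 2"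
    unfolding monomial3_def UNIV_3 by simp
  then show ?thesis by (simp add: kronecker_index_def power_add power_mult)
qed

lemma kronecker_index_le: "e \<in> cubic_exps \<Longrightarrow> kronecker_index e \<le> 15"
  using cubic_exps_le[of e 1] cubic_exps_le[of e 2] by (simp add: kronecker_index_def)

lemma inj_on_kronecker_index: "inj_on kronecker_index cubic_exps"
proof (rule inj_onI)
  fix e e' assume e: "e \<in> cubic_exps" "e' \<in> cubic_exps"
    and eq: "kronecker_index e = kronecker_index e'"
  have digits: "kronecker_index e mod 4 = e 1" "kronecker_index e div 4 = e 2"
    if "e \<in> cubic_exps" for e
    using cubic_exps_le[OF that, of 1] by (simp_all add: kronecker_index_def)
  show "e = e'"
    using digits[OF e(1)] digits[OF e(2)] eq by (intro cubic_exps_eqI[OF e]) metis+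
qed

lemma finite_cubic_exps: "finite cubic_exps"
proof (rule finite_imageD[OF _ inj_on_kronecker_index])
  show "finite (kronecker_index ` cubic_exps)"
    by (rule finite_subset[of _ "{..15}"]) (auto simp: kronecker_index_le)
qed

lemma monomial3_coeffs_eq_0:
  assumes zero: "\<forall>x. (\<Sum>e\<in>cubic_exps. g e * monomial3 e x) = (0::complex)"
    and e0: "e0 \<in> cubic_exps"
  shows "g e0 = 0"
proof -
  define c where "c i = (\<Sum>e\<in>{e\<in>cubic_exps. kronecker_index e = i}. g e)" for i
  have "(\<Sum>i\<le>15. c i * t ^ i) = 0" for t :: complex
  proof -
    have "(\<Sum>i\<le>15. c i * t ^ i) =
          (\<Sum>i\<le>15. \<Sum>e\<in>{e\<in>cubic_exps. kronecker_index e = i}. g e * t ^ kronecker_index e)"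
      by (auto simp: c_def sum_distrib_right intro!: sum.cong)
    also have "\<dots> = (\<Sum>e\<in>cubic_exps. g e * t ^ kronecker_index e)"
      by (rule sum.group) (auto simp: finite_cubic_exps kronecker_index_le)
    also have "\<dots> = 0"
      using zero by (simp add: monomial3_kronecker[symmetric])
    finally show ?thesis .
  qed
  then have "c (kronecker_index e0) = 0"
    using polyfun_eq_0[of c 15] kronecker_index_le[OF e0] by blast
  moreover have "{e\<in>cubic_exps. kronecker_index e = kronecker_index e0} = {e0}"
    using inj_on_kronecker_index e0 by (auto dest: inj_onD)
  ultimately show ?thesis by (simp add: c_def)
qed

lemma is_coord_family_unique:
  assumes "is_coord_family c F" "is_coord_family d F" "e \<in> cubic_exps"
  shows "c e A = d e A"
proof -
  have "\<forall>x. (\<Sum>e\<in>cubic_exps. (c e A - d e A) * monomial3 e x) = 0"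
    using assms(1,2) by (simp add: is_coord_family_def left_diff_distrib sum_subtractf)
  from monomial3_coeffs_eq_0[OF this assms(3)] show ?thesis by simp
qed

definition multideg :: "(3 \<Rightarrow> 3) \<Rightarrow> 3 \<Rightarrow> nat" where
  "multideg f i = card {r. f r = i}"

lemma prod_eq_monomial3_multideg: "(\<Prod>r\<in>UNIV. x $ f r) = monomial3 (multideg f) x"
proof -
  have "(\<Prod>r\<in>UNIV. x $ f r) = (\<Prod>i\<in>UNIV. \<Prod>r\<in>{r\<in>UNIV. f r = i}. x $ f r)"
    by (rule prod.group[symmetric]) auto
  then show ?thesis by (simp add: monomial3_def multideg_def)
qed

lemma multideg_in_cubic_exps: "multideg f \<in> cubic_exps"
proof -
  have "(\<Sum>i\<in>UNIV. \<Sum>r\<in>{r\<in>UNIV. f r = i}. 1) = (\<Sum>r\<in>(UNIV::3 set). 1::nat)"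
    by (rule sum.group) auto
  then show ?thesis by (simp add: cubic_exps_def multideg_def)
qed

lemma is_coord_family_of_sum_words:
  assumes F: "\<And>A x. F A x = (\<Sum>f\<in>UNIV. (\<Prod>r\<in>UNIV. x $ f r) * G f A)"
  shows "is_coord_family (\<lambda>e A. \<Sum>f\<in>{f. multideg f = e}. G f A) F"
  unfolding is_coord_family_def
proof (intro allI)
  fix A x
  have "(\<Sum>e\<in>cubic_exps. (\<Sum>f\<in>{f. multideg f = e}. G f A) * monomial3 e x)
      = (\<Sum>e\<in>cubic_exps. \<Sum>f\<in>{f\<in>UNIV. multideg f = e}. monomial3 (multideg f) x * G f A)"
    by (auto simp: sum_distrib_left sum_distrib_right mult.commute intro!: sum.cong)
  also have "\<dots> = (\<Sum>f\<in>UNIV. monomial3 (multideg f) x * G f A)"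
    by (rule sum.group) (auto simp: finite_cubic_exps multideg_in_cubic_exps)
  also have "\<dots> = F A x" by (simp add: F prod_eq_monomial3_multideg)
  finally show "F A x = (\<Sum>e\<in>cubic_exps. (\<Sum>f\<in>{f. multideg f = e}. G f A) * monomial3 e x)"
    by simp
qed

lemma in_P1_span_sum:
  assumes "inj_on t S" "\<And>f. f \<in> S \<Longrightarrow> inj (t f)"
  shows "in_P1_span (\<lambda>A. \<Sum>f\<in>S. P1_coord (t f) A)"
  unfolding in_P1_span_def
proof (intro exI allI)
  fix A
  have "(\<Sum>f\<in>S. P1_coord (t f) A) = (\<Sum>s\<in>t ` S. P1_coord s A)"
    by (simp add: sum.reindex[OF assms(1)])
  also have "\<dots> = (\<Sum>s\<in>{s. inj s}. of_bool (s \<in> t ` S) * P1_coord s A)"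
    using assms(2) by (intro sum.mono_neutral_cong_left) auto
  finally show "(\<Sum>f\<in>S. P1_coord (t f) A) =
                (\<Sum>s\<in>{s. inj s}. of_bool (s \<in> t ` S) * P1_coord s A)" .
qed

lemma coord_families_in_P1_span:
  fixes t :: "(3 \<Rightarrow> 3) \<Rightarrow> 3 \<Rightarrow> 3 \<times> 3"
  assumes F: "\<And>A x. F A x = (\<Sum>f\<in>UNIV. (\<Prod>r\<in>UNIV. x $ f r) * P1_coord (t f) A)"
    and "inj t" "\<And>f. inj (t f)"
  shows "(\<exists>c. is_coord_family c F) \<and>
         (\<forall>c. is_coord_family c F \<longrightarrow> (\<forall>e\<in>cubic_exps. in_P1_span (c e)))"
proof -
  let ?c = "\<lambda>e A. \<Sum>f\<in>{f. multideg f = e}. P1_coord (t f) A"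
  have c: "is_coord_family ?c F" using F by (rule is_coord_family_of_sum_words)
  moreover have "in_P1_span (c e)" if "is_coord_family c F" "e \<in> cubic_exps" for c e
  proof -
    have "c e = ?c e" using is_coord_family_unique[OF that(1) c that(2)] by blast
    moreover have "in_P1_span (?c e)"
      using assms(2,3) by (intro in_P1_span_sum) (auto intro: inj_on_subset)
    ultimately show ?thesis by simp
  qed
  ultimately show ?thesis by blast
qed

theorem proposition4p3:
  shows "(\<exists>c. is_coord_family c c3) \<and> (\<exists>c. is_coord_family c c4) \<and>
    (\<forall>c. is_coord_family c c3 \<longrightarrow> (\<forall>e\<in>cubic_exps. in_P1_span (c e))) \<and>
    (\<forall>c. is_coord_family c c4 \<longrightarrow> (\<forall>e\<in>cubic_exps. in_P1_span (c e)))"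
proof -
  have "(\<exists>c. is_coord_family c c3) \<and>
        (\<forall>c. is_coord_family c c3 \<longrightarrow> (\<forall>e\<in>cubic_exps. in_P1_span (c e)))"
    by (rule coord_families_in_P1_span[OF c3_eq_sum_P1_coord]) (auto intro!: injI simp: fun_eq_iff)
  moreover have "(\<exists>c. is_coord_family c c4) \<and>
        (\<forall>c. is_coord_family c c4 \<longrightarrow> (\<forall>e\<in>cubic_exps. in_P1_span (c e)))"
    by (rule coord_families_in_P1_span[OF c4_eq_sum_P1_coord]) (auto intro!: injI simp: fun_eq_iff)
  ultimately show ?thesis by blast
qed

end
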